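(* Let $N\ge 2$ and let $P_1,\dots,P_N$ be probability densities on a feature space $\mathcal{X}$, and let $\overline{P}=\frac{1}{N}\sum_{i=1}^N P_i$. Let $\mathcal{D}^*$ be the optimal discriminator for the least-squares objective $J_{\mathcal D}=\sum_{i=1}^N \mathbb{E}_{\mathbf f\sim P_i}\big[\sum_{j=1}^N(\mathcal{D}_j(\mathbf f)-\mathbb{1}_{\{i=j\}})^2\big]$ over discriminators $\mathcal D:\mathcal X\to\{v\in\mathbb{R}^N: v_i\ge 0,\ \sum_i v_i=1\}$, namely $\mathcal{D}^*_i(\mathbf f)=P_i(\mathbf f)/\sum_{j=1}^N P_j(\mathbf f)$. Define the domain loss of the feature extractor as $$J^{\mathcal D}_{\mathcal F_s}=\sum_{i=1}^N \mathbb{E}_{\mathbf f\sim P_i}\Big[\sum_{j=1}^N\Big(\mathcal{D}^*_j(\mathbf f)-\frac1N\Big)^2\Big].$$ Then $$J^{\mathcal D}_{\mathcal F_s}=\frac1N\sum_{i=1}^N \chi^2_{\mathrm{Neyman}}(P_i\,\|\,\overline{P}),$$ where $\chi^2_{\mathrm{Neyman}}(P_i\|\overline P)=\int \frac{(P_i(\mathbf f)-\overline P(\mathbf f))^2}{\overline P(\mathbf f)}\,d\mathbf f$.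
   Context: In the paper, $P_i$ is the distribution of shared features $\mathcal F_s(x)$ for inputs $x$ from domain $i$; the paper calls the divergence $\int (P-\overline P)^2/\overline P$ the Neyman $\chi^2$ divergence of $P$ from $\overline P$. *)

theory Defs
  imports "HOL-Analysis.Analysis"
begin

definition prob_density :: "'a measure \<Rightarrow> ('a \<Rightarrow> real) \<Rightarrow> bool" where
  "prob_density M p \<longleftrightarrow> p \<in> borel_measurable M \<and> (\<forall>x\<in>space M. 0 \<le> p x)
     \<and> integrable M p \<and> (LINT x|M. p x) = 1"

definition Pbar :: "nat \<Rightarrow> (nat \<Rightarrow> 'a \<Rightarrow> real) \<Rightarrow> 'a \<Rightarrow> real" where
  "Pbar N P x = (\<Sum>i=1..N. P i x) / real N"

definition Dstar :: "nat \<Rightarrow> (nat \<Rightarrow> 'a \<Rightarrow> real) \<Rightarrow> nat \<Rightarrow> 'a \<Rightarrow> real" where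
  "Dstar N P j x = P j x / (\<Sum>k=1..N. P k x)"

definition expect_dens :: "'a measure \<Rightarrow> ('a \<Rightarrow> real) \<Rightarrow> ('a \<Rightarrow> real) \<Rightarrow> real" where
  "expect_dens M p g = integral\<^sup>L (density M (\<lambda>x. ennreal (p x))) g"

definition domain_loss :: "'a measure \<Rightarrow> nat \<Rightarrow> (nat \<Rightarrow> 'a \<Rightarrow> real) \<Rightarrow> real" where
  "domain_loss M N P = (\<Sum>i=1..N. expect_dens M (P i)
      (\<lambda>f. \<Sum>j=1..N. (Dstar N P j f - 1 / real N)\<^sup>2))"

definition neyman_chi2 :: "'a measure \<Rightarrow> ('a \<Rightarrow> real) \<Rightarrow> ('a \<Rightarrow> real) \<Rightarrow> real" where
  "neyman_chi2 M Q R = (LINT x|M. (Q x - R x)\<^sup>2 / R x)"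

end

theory Submission
  imports Defs
begin

text \<open>At a feature \<open>f\<close> put \<open>p\<^sub>k = P\<^sub>k f\<close> and \<open>S = \<Sum>\<^sub>k p\<^sub>k\<close>, so that
  \<open>D\<^sup>*\<^sub>j f = p\<^sub>j / S\<close> and \<open>Pbar f = S / N\<close>. Both the mixture-weighted loss
  \<open>\<Sum>\<^sub>i p\<^sub>i \<Sum>\<^sub>j (p\<^sub>j / S - 1/N)\<^sup>2\<close> and \<open>(1/N) \<Sum>\<^sub>i (p\<^sub>i - S/N)\<^sup>2 / (S/N)\<close>
  equal \<open>\<Sum>\<^sub>j (p\<^sub>j - S/N)\<^sup>2 / S\<close>. Integrating this pointwise identity gives the theorem;
  what remains is integrability, from the bounds \<open>0 \<le> D\<^sup>*\<^sub>j \<le> 1\<close> and \<open>P\<^sub>i \<le> N \<cdot> Pbar\<close>.\<close>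

text \<open>No hypotheses are needed: if \<open>S = 0\<close> or \<open>card A = 0\<close>, both sides vanish
  by the conventions \<open>x / 0 = 0\<close> and \<open>card\<close> of an infinite set \<open>= 0\<close>.\<close>

lemma weighted_sq_dev_eq_chi2:
  fixes p :: "'i \<Rightarrow> real" and A :: "'i set"
  defines "S \<equiv> sum p A" and "n \<equiv> real (card A)"
  shows "(\<Sum>i\<in>A. p i * (\<Sum>j\<in>A. (p j / S - 1 / n)\<^sup>2))
       = (1 / n) * (\<Sum>i\<in>A. (p i - S / n)\<^sup>2 / (S / n))"
proof (cases "S = 0 \<or> n = 0")
  case True
  then show ?thesis by (auto simp: S_def n_def card_eq_0_iff simp flip: sum_distrib_right)
next
  case False
  have "(\<Sum>i\<in>A. p i * (\<Sum>j\<in>A. (p j / S - 1 / n)\<^sup>2)) = S * (\<Sum>j\<in>A. (p j - S / n)\<^sup>2 / S\<^sup>2)"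
    using False by (simp add: S_def sum_distrib_right power_divide diff_divide_distrib flip: power_divide)
  also have "\<dots> = (1 / n) * (\<Sum>i\<in>A. (p i - S / n)\<^sup>2 / (S / n))"
    using False by (simp add: sum_distrib_left power2_eq_square)
  finally show ?thesis .
qed

lemma chi2_integrand_le:
  fixes a b c :: real
  assumes "0 \<le> a" "0 \<le> b" "a \<le> c * b" "1 \<le> c"
  shows "(a - b)\<^sup>2 / b \<le> c * (a + b)"
proof (cases "b = 0")
  case True
  then show ?thesis using assms by simp
next
  case False
  with assms have "b > 0" by simp
  have "b \<le> c * b"
    using assms mult_right_mono[of 1 c b] by simp
  with assms have "\<bar>a - b\<bar> \<le> c * b"
    by (simp add: abs_le_iff)
  then have "\<bar>a - b\<bar> * \<bar>a - b\<bar> \<le> \<bar>a - b\<bar> * (c * b)"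
    by (intro mult_left_mono) auto
  then have "(a - b)\<^sup>2 \<le> \<bar>a - b\<bar> * (c * b)"
    by (simp add: power2_eq_square)
  with \<open>b > 0\<close> have "(a - b)\<^sup>2 / b \<le> c * \<bar>a - b\<bar>"
    by (simp add: divide_le_eq mult.commute mult.left_commute)
  also have "\<dots> \<le> c * (a + b)"
    using assms by (intro mult_left_mono) auto
  finally show ?thesis .
qed

lemma Dstar_nonneg_le_one:
  assumes "\<And>k. k \<in> {1..N} \<Longrightarrow> 0 \<le> P k x" and "j \<in> {1..N}"
  shows "0 \<le> Dstar N P j x \<and> Dstar N P j x \<le> 1"
proof -
  have "0 \<le> P j x" "P j x \<le> (\<Sum>k=1..N. P k x)" "0 \<le> (\<Sum>k=1..N. P k x)"
    using assms by (auto intro: member_le_sum sum_nonneg)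
  then show ?thesis
    by (auto simp: Dstar_def divide_le_eq_1)
qed

lemma sum_sq_Dstar_dev_le:
  assumes "\<And>k. k \<in> {1..N} \<Longrightarrow> 0 \<le> P k x"
  shows "(\<Sum>j=1..N. (Dstar N P j x - 1 / real N)\<^sup>2) \<le> real N"
proof -
  have "(Dstar N P j x - 1 / real N)\<^sup>2 \<le> 1" if "j \<in> {1..N}" for j
  proof -
    have "0 \<le> 1 / real N" "1 / real N \<le> 1" by (auto simp: divide_le_eq_1)
    moreover note Dstar_nonneg_le_one[of N P x j, OF assms that]
    ultimately have "\<bar>Dstar N P j x - 1 / real N\<bar> \<le> 1"
      unfolding abs_le_iff by linarith
    then show ?thesis by (simp add: abs_square_le_1)
  qed
  then have "(\<Sum>j=1..N. (Dstar N P j x - 1 / real N)\<^sup>2) \<le> (\<Sum>j=1..N. 1)"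
    by (rule sum_mono)
  then show ?thesis by simp
qed

lemma integrable_mult_bounded:
  fixes f g :: "'a \<Rightarrow> real"
  assumes "integrable M f" "g \<in> borel_measurable M" "\<And>x. x \<in> space M \<Longrightarrow> \<bar>g x\<bar> \<le> C"
  shows "integrable M (\<lambda>x. f x * g x)"
proof (rule Bochner_Integration.integrable_bound)
  show "integrable M (\<lambda>x. C * \<bar>f x\<bar>)"
    using assms(1) by auto
  show "(\<lambda>x. f x * g x) \<in> borel_measurable M"
    using assms(1,2) by measurable
  show "AE x in M. norm (f x * g x) \<le> norm (C * \<bar>f x\<bar>)"
  proof (rule AE_I2)
    fix x assume "x \<in> space M"
    then have "\<bar>f x\<bar> * \<bar>g x\<bar> \<le> \<bar>f x\<bar> * C"
      using assms(3) by (intro mult_left_mono) auto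
    also have "\<dots> \<le> \<bar>f x\<bar> * \<bar>C\<bar>"
      by (intro mult_left_mono) auto
    finally show "norm (f x * g x) \<le> norm (C * \<bar>f x\<bar>)"
      by (simp add: abs_mult mult.commute)
  qed
qed

lemma expect_dens_eq_integral:
  assumes "p \<in> borel_measurable M" "\<And>x. x \<in> space M \<Longrightarrow> 0 \<le> p x" "g \<in> borel_measurable M"
  shows "expect_dens M p g = (LINT x|M. p x * g x)"
  unfolding expect_dens_def using assms by (simp add: integral_density)

lemma prob_densityD:
  assumes "prob_density M p"
  shows "p \<in> borel_measurable M" "\<And>x. x \<in> space M \<Longrightarrow> 0 \<le> p x" "integrable M p"
  using assms by (auto simp: prob_density_def)

lemma weighted_Dstar_loss_eq_chi2:
  "(\<Sum>i=1..N. P i x * (\<Sum>j=1..N. (Dstar N P j x - 1 / real N)\<^sup>2))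
     = (1 / real N) * (\<Sum>i=1..N. (P i x - Pbar N P x)\<^sup>2 / Pbar N P x)"
  using weighted_sq_dev_eq_chi2[of "\<lambda>k. P k x" "{1..N}"]
  unfolding Dstar_def Pbar_def by (simp only: card_atLeastAtMost diff_Suc_1)

context
  fixes M :: "'a measure" and N :: nat and P :: "nat \<Rightarrow> 'a \<Rightarrow> real"
  assumes densities: "\<And>i. i \<in> {1..N} \<Longrightarrow> prob_density M (P i)"
begin

private lemma measurable_P: "i \<in> {1..N} \<Longrightarrow> P i \<in> borel_measurable M"
  and nonneg_P: "i \<in> {1..N} \<Longrightarrow> x \<in> space M \<Longrightarrow> 0 \<le> P i x"
  and integrable_P: "i \<in> {1..N} \<Longrightarrow> integrable M (P i)"
  using prob_densityD[OF densities] by blast+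

lemma borel_measurable_Pbar: "Pbar N P \<in> borel_measurable M"
  unfolding Pbar_def using measurable_P by measurable

lemma integrable_weighted_loss:
  assumes "i \<in> {1..N}"
  shows "integrable M (\<lambda>x. P i x * (\<Sum>j=1..N. (Dstar N P j x - 1 / real N)\<^sup>2))"
proof (rule integrable_mult_bounded)
  show "integrable M (P i)" using integrable_P[OF assms] .
  show "(\<lambda>x. \<Sum>j=1..N. (Dstar N P j x - 1 / real N)\<^sup>2) \<in> borel_measurable M"
    unfolding Dstar_def using measurable_P by measurable
  show "\<bar>\<Sum>j=1..N. (Dstar N P j x - 1 / real N)\<^sup>2\<bar> \<le> real N" if "x \<in> space M" for x
    using sum_sq_Dstar_dev_le[of N P x] nonneg_P[OF _ that] by (simp add: sum_nonneg)
qed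

lemma integrable_chi2_integrand:
  assumes i: "i \<in> {1..N}"
  shows "integrable M (\<lambda>x. (P i x - Pbar N P x)\<^sup>2 / Pbar N P x)"
proof (rule Bochner_Integration.integrable_bound)
  have "integrable M (Pbar N P)"
    unfolding Pbar_def using integrable_P by (intro integrable_divide integrable_sum) auto
  then show "integrable M (\<lambda>x. real N * (P i x + Pbar N P x))"
    using integrable_P[OF i] by auto
  show "(\<lambda>x. (P i x - Pbar N P x)\<^sup>2 / Pbar N P x) \<in> borel_measurable M"
    using measurable_P[OF i] borel_measurable_Pbar by measurable
  have "(P i x - Pbar N P x)\<^sup>2 / Pbar N P x \<le> real N * (P i x + Pbar N P x)"
    and "0 \<le> Pbar N P x" if x: "x \<in> space M" for x
  proof -
    show Pbar_nonneg: "0 \<le> Pbar N P x"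
      unfolding Pbar_def using nonneg_P[OF _ x] by (auto intro!: divide_nonneg_nonneg sum_nonneg)
    have "P i x \<le> real N * Pbar N P x"
      unfolding Pbar_def using i nonneg_P[OF _ x] by (auto intro: member_le_sum)
    then show "(P i x - Pbar N P x)\<^sup>2 / Pbar N P x \<le> real N * (P i x + Pbar N P x)"
      using i nonneg_P[OF i x] Pbar_nonneg by (intro chi2_integrand_le) auto
  qed
  then show "AE x in M. norm ((P i x - Pbar N P x)\<^sup>2 / Pbar N P x) \<le> norm (real N * (P i x + Pbar N P x))"
    using nonneg_P[OF i] by (auto intro!: AE_I2)
qed

lemma domain_loss_eq_integral:
  "domain_loss M N P = (LINT x|M. (\<Sum>i=1..N. P i x * (\<Sum>j=1..N. (Dstar N P j x - 1 / real N)\<^sup>2)))"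
proof -
  have "(\<lambda>x. \<Sum>j=1..N. (Dstar N P j x - 1 / real N)\<^sup>2) \<in> borel_measurable M"
    unfolding Dstar_def using measurable_P by measurable
  then have "domain_loss M N P
      = (\<Sum>i=1..N. LINT x|M. P i x * (\<Sum>j=1..N. (Dstar N P j x - 1 / real N)\<^sup>2))"
    unfolding domain_loss_def
    by (intro sum.cong refl expect_dens_eq_integral measurable_P nonneg_P) auto
  also have "\<dots> = (LINT x|M. (\<Sum>i=1..N. P i x * (\<Sum>j=1..N. (Dstar N P j x - 1 / real N)\<^sup>2)))"
    by (rule Bochner_Integration.integral_sum[symmetric]) (rule integrable_weighted_loss)
  finally show ?thesis .
qed

end

theorem theorem2:
  fixes M :: "'a measure" and N :: nat and P :: "nat \<Rightarrow> 'a \<Rightarrow> real"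
  assumes "N \<ge> 2"
    and "\<And>i. i \<in> {1..N} \<Longrightarrow> prob_density M (P i)"
  shows "domain_loss M N P = (1 / real N) * (\<Sum>i=1..N. neyman_chi2 M (P i) (Pbar N P))"
proof -
  have "domain_loss M N P
      = (LINT x|M. (\<Sum>i=1..N. P i x * (\<Sum>j=1..N. (Dstar N P j x - 1 / real N)\<^sup>2)))"
    using domain_loss_eq_integral assms(2) .
  also have "\<dots> = (LINT x|M. (1 / real N) * (\<Sum>i=1..N. (P i x - Pbar N P x)\<^sup>2 / Pbar N P x))"
    by (simp only: weighted_Dstar_loss_eq_chi2)
  also have "\<dots> = (1 / real N) * (\<Sum>i=1..N. neyman_chi2 M (P i) (Pbar N P))"
    unfolding neyman_chi2_def
    by (subst integral_mult_right_zero, subst Bochner_Integration.integral_sum)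
      (use integrable_chi2_integrand assms(2) in auto)
  finally show ?thesis .
qed

end
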